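(* Let $G$ be a finitely generated torsion-free nilpotent group and suppose the decomposition $\overline{G}=R_1\times R_2$ into rational subgroups matches the decomposition $G=G_1\times G_2$. Let $X_i=R_iZ(\overline{G})\cap G$ for $i=1,2$. Then $X_i=G_iZ(G)$ for $i=1,2$.
   Context: $\overline{G}$ is the rational closure of $G$ (torsion-free nilpotent, containing $G$, uniquely divisible, each element has a positive power in $G$); for $H\le G$, $\overline{H}$ is the set of elements of $\overline{G}$ having a positive power in $H$. A subgroup is rational if closed under taking all $n$-th roots. A decomposition $\overline{G}=R_1\times R_2$ matches $G=G_1\times G_2$ if $\overline{G_i}\,Z(\overline{G})=R_i\,Z(\overline{G})$ for $i=1,2$. *)

theory Defs
  imports "HOL-Algebra.Algebra"
begin

definition center :: "('a, 'b) monoid_scheme \<Rightarrow> 'a set" where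
  "center G = {z \<in> carrier G. \<forall>g \<in> carrier G. z \<otimes>\<^bsub>G\<^esub> g = g \<otimes>\<^bsub>G\<^esub> z}"

text \<open>Lower central series: gamma_1 = G (index 0 here), gamma_(k+1) = [gamma_k, G].\<close>
fun lower_central :: "('a, 'b) monoid_scheme \<Rightarrow> nat \<Rightarrow> 'a set" where
  "lower_central G 0 = carrier G"
| "lower_central G (Suc k) = generate G
     {x \<otimes>\<^bsub>G\<^esub> y \<otimes>\<^bsub>G\<^esub> inv\<^bsub>G\<^esub> x \<otimes>\<^bsub>G\<^esub> inv\<^bsub>G\<^esub> y | x y.
        x \<in> lower_central G k \<and> y \<in> carrier G}"

definition nilpotent_group :: "('a, 'b) monoid_scheme \<Rightarrow> bool" where
  "nilpotent_group G \<longleftrightarrow> group G \<and> (\<exists>k. lower_central G k = {\<one>\<^bsub>G\<^esub>})"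

definition finitely_generated_group :: "('a, 'b) monoid_scheme \<Rightarrow> bool" where
  "finitely_generated_group G \<longleftrightarrow>
     (\<exists>S. finite S \<and> S \<subseteq> carrier G \<and> generate G S = carrier G)"

definition torsion_free :: "('a, 'b) monoid_scheme \<Rightarrow> bool" where
  "torsion_free G \<longleftrightarrow>
     (\<forall>x \<in> carrier G. \<forall>n::nat. n > 0 \<longrightarrow> x [^]\<^bsub>G\<^esub> n = \<one>\<^bsub>G\<^esub> \<longrightarrow> x = \<one>\<^bsub>G\<^esub>)"

definition uniquely_divisible :: "('a, 'b) monoid_scheme \<Rightarrow> bool" where
  "uniquely_divisible G \<longleftrightarrow>
     (\<forall>x \<in> carrier G. \<forall>n::nat. n > 0 \<longrightarrow> (\<exists>!y. y \<in> carrier G \<and> y [^]\<^bsub>G\<^esub> n = x))"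

definition rational_closure_of :: "('a, 'b) monoid_scheme \<Rightarrow> 'a set \<Rightarrow> bool" where
  "rational_closure_of Gb G \<longleftrightarrow>
     group Gb \<and> nilpotent_group Gb \<and> torsion_free Gb \<and> uniquely_divisible Gb \<and>
     subgroup G Gb \<and>
     (\<forall>x \<in> carrier Gb. \<exists>n::nat. n > 0 \<and> x [^]\<^bsub>Gb\<^esub> n \<in> G)"

definition rat_closure_set :: "('a, 'b) monoid_scheme \<Rightarrow> 'a set \<Rightarrow> 'a set" where
  "rat_closure_set Gb H = {x \<in> carrier Gb. \<exists>n::nat. n > 0 \<and> x [^]\<^bsub>Gb\<^esub> n \<in> H}"

definition rational_subgroup :: "'a set \<Rightarrow> ('a, 'b) monoid_scheme \<Rightarrow> bool" where
  "rational_subgroup R G \<longleftrightarrow> subgroup R G \<and>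
     (\<forall>x \<in> carrier G. \<forall>n::nat. n > 0 \<longrightarrow> x [^]\<^bsub>G\<^esub> n \<in> R \<longrightarrow> x \<in> R)"

definition internal_direct_product :: "('a, 'b) monoid_scheme \<Rightarrow> 'a set \<Rightarrow> 'a set \<Rightarrow> bool" where
  "internal_direct_product H A B \<longleftrightarrow>
     A \<lhd> H \<and> B \<lhd> H \<and> A \<inter> B = {\<one>\<^bsub>H\<^esub>} \<and> A <#>\<^bsub>H\<^esub> B = carrier H"

end

theory Submission
  imports Defs
begin

text \<open>
  In a uniquely divisible group, \<open>x\<^sup>n\<close> commuting with \<open>s\<close> forces \<open>x\<close> to commute with \<open>s\<close>
  (the conjugate \<open>s x s\<inverse>\<close> is an \<open>n\<close>-th root of \<open>x\<^sup>n\<close>), so centralizers are rational subgroups.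
  Hence the centre of \<open>G\<close> lies in the centre of its rational closure \<open>Gb\<close>, and every element
  of the rational closure of \<open>G\<^sub>1\<close> centralizes \<open>G\<^sub>2\<close>. Now if \<open>g = g\<^sub>1 g\<^sub>2 \<in> G\<close> also equals \<open>a z\<close> with \<open>a\<close> in the
  rational closure of \<open>G\<^sub>1\<close> and \<open>z\<close> central, then \<open>g\<^sub>2 = g\<^sub>1\<inverse> a z\<close> centralizes \<open>G\<^sub>2\<close>, and it
  centralizes \<open>G\<^sub>1\<close> by the direct decomposition; thus \<open>g\<^sub>2 \<in> Z(G)\<close> and \<open>g \<in> G\<^sub>1 Z(G)\<close>.
\<close>

definition centralizer :: "('a, 'b) monoid_scheme \<Rightarrow> 'a set \<Rightarrow> 'a set" where
  "centralizer G S = {x \<in> carrier G. \<forall>s \<in> S. x \<otimes>\<^bsub>G\<^esub> s = s \<otimes>\<^bsub>G\<^esub> x}"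

lemma (in group) inv_commute:
  assumes xy: "x \<otimes> y = y \<otimes> x" and x: "x \<in> carrier G" and y: "y \<in> carrier G"
  shows "inv x \<otimes> y = y \<otimes> inv x"
proof -
  have "inv x \<otimes> y = inv x \<otimes> (y \<otimes> x) \<otimes> inv x" using x y by (simp add: m_assoc)
  also have "\<dots> = inv x \<otimes> (x \<otimes> y) \<otimes> inv x" by (simp only: xy)
  also have "\<dots> = y \<otimes> inv x" using x y by (simp add: m_assoc[symmetric])
  finally show ?thesis .
qed

lemma (in group) subgroup_centralizer:
  assumes "S \<subseteq> carrier G"
  shows "subgroup (centralizer G S) G"
proof (rule subgroupI)
  fix x y assume x: "x \<in> centralizer G S" and y: "y \<in> centralizer G S"
  show "inv x \<in> centralizer G S"
    using x assms unfolding centralizer_def by (auto simp: subset_iff intro!: inv_commute)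
  have "x \<otimes> y \<otimes> s = s \<otimes> (x \<otimes> y)" if s: "s \<in> S" for s
  proof -
    have c: "x \<in> carrier G" "y \<in> carrier G" "s \<in> carrier G"
      and xs: "x \<otimes> s = s \<otimes> x" and ys: "y \<otimes> s = s \<otimes> y"
      using x y s assms unfolding centralizer_def by auto
    have "x \<otimes> y \<otimes> s = x \<otimes> s \<otimes> y" using c by (simp add: m_assoc ys)
    also have "\<dots> = s \<otimes> (x \<otimes> y)" using c by (simp add: xs m_assoc)
    finally show ?thesis .
  qed
  then show "x \<otimes> y \<in> centralizer G S"
    using x y unfolding centralizer_def by auto
qed (use assms in \<open>auto simp: centralizer_def subset_iff intro!: exI[of _ \<one>]\<close>)

lemma (in group) conjugation_hom:
  "y \<in> carrier G \<Longrightarrow> (\<lambda>x. y \<otimes> x \<otimes> inv y) \<in> hom G G"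
  by (rule homI) (simp_all add: m_assoc, simp add: m_assoc[symmetric])

lemma (in group) uniquely_divisible_root_unique:
  assumes "uniquely_divisible G" "x \<in> carrier G" "y \<in> carrier G" "n > 0"
    and "x [^] n = y [^] (n::nat)"
  shows "x = y"
proof -
  have "\<exists>!w. w \<in> carrier G \<and> w [^] n = y [^] n"
    using assms unfolding uniquely_divisible_def by simp
  then show ?thesis using assms by blast
qed

lemma (in group) rational_subgroup_centralizer:
  assumes ud: "uniquely_divisible G" and S: "S \<subseteq> carrier G"
  shows "rational_subgroup (centralizer G S) G"
  unfolding rational_subgroup_def
proof (intro conjI ballI allI impI)
  show "subgroup (centralizer G S) G" using S by (rule subgroup_centralizer)
  fix x and n :: nat
  assume x: "x \<in> carrier G" and n: "n > 0" and xn: "x [^] n \<in> centralizer G S"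
  have "x \<otimes> s = s \<otimes> x" if s: "s \<in> S" for s
  proof -
    have sc: "s \<in> carrier G" using s S by blast
    have "(s \<otimes> x \<otimes> inv s) [^] n = s \<otimes> x [^] n \<otimes> inv s"
      using hom_nat_pow[OF conjugation_hom[OF sc] x is_group is_group] by simp
    also have "\<dots> = x [^] n \<otimes> s \<otimes> inv s"
      using xn s unfolding centralizer_def by simp
    also have "\<dots> = x [^] n"
      using x sc by (simp add: m_assoc)
    finally have "s \<otimes> x \<otimes> inv s = x"
      by (rule uniquely_divisible_root_unique[OF ud _ x n, rotated]) (use x sc in simp)
    then show ?thesis using x sc by (simp add: inv_solve_right')
  qed
  then show "x \<in> centralizer G S" using x unfolding centralizer_def by blast
qed

lemma rat_closure_set_subset:
  "rational_subgroup R G \<Longrightarrow> H \<subseteq> R \<Longrightarrow> rat_closure_set G H \<subseteq> R"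
  unfolding rational_subgroup_def rat_closure_set_def by blast

lemma (in group) centralizer_set_mult:
  assumes x: "x \<in> centralizer G A" "x \<in> centralizer G B"
    and A: "A \<subseteq> carrier G" and B: "B \<subseteq> carrier G"
  shows "x \<in> centralizer G (A <#> B)"
proof -
  have "x \<otimes> (a \<otimes> b) = a \<otimes> b \<otimes> x" if a: "a \<in> A" and b: "b \<in> B" for a b
  proof -
    have c: "x \<in> carrier G" "a \<in> carrier G" "b \<in> carrier G"
      and xa: "x \<otimes> a = a \<otimes> x" and xb: "x \<otimes> b = b \<otimes> x"
      using x a b A B unfolding centralizer_def by auto
    have "x \<otimes> (a \<otimes> b) = a \<otimes> x \<otimes> b" using c by (simp add: m_assoc[symmetric] xa)
    also have "\<dots> = a \<otimes> b \<otimes> x" using c by (simp add: m_assoc xb)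
    finally show ?thesis .
  qed
  then show ?thesis using x unfolding centralizer_def set_mult_def by auto
qed

lemma center_subgroup_eq:
  "center (G\<lparr>carrier := H\<rparr>) = H \<inter> centralizer G H" if "H \<subseteq> carrier G"
  using that unfolding center_def centralizer_def by auto

lemma (in group) center_subgroup_subset_center:
  assumes ud: "uniquely_divisible G" and H: "subgroup H G"
    and roots: "carrier G \<subseteq> rat_closure_set G H"
  shows "center (G\<lparr>carrier := H\<rparr>) \<subseteq> center G"
proof
  fix z assume z: "z \<in> center (G\<lparr>carrier := H\<rparr>)"
  have H_carr: "H \<subseteq> carrier G" using H by (rule subgroup.subset)
  have zc: "z \<in> carrier G" and "H \<subseteq> centralizer G {z}"
    using z H_carr unfolding center_def centralizer_def by auto
  then have "carrier G \<subseteq> centralizer G {z}"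
    using roots rat_closure_set_subset[OF rational_subgroup_centralizer[OF ud]] by blast
  then have commutes: "g \<otimes> z = z \<otimes> g" if "g \<in> carrier G" for g
    using that unfolding centralizer_def by blast
  show "z \<in> center G"
    unfolding center_def using zc commutes[THEN sym] by blast
qed

lemma (in group) internal_direct_product_sym:
  "internal_direct_product G A B \<Longrightarrow> internal_direct_product G B A"
  unfolding internal_direct_product_def
  by (metis Int_commute commut_normal normal_imp_subgroup)

lemma (in group) internal_direct_product_commute:
  "internal_direct_product G A B \<Longrightarrow> a \<in> A \<Longrightarrow> b \<in> B \<Longrightarrow> a \<otimes> b = b \<otimes> a"
  unfolding internal_direct_product_def by (auto intro: normal_imp_commuting)

lemma (in group) internal_direct_product_subgroupD:
  assumes H: "subgroup H G" and d: "internal_direct_product (G\<lparr>carrier := H\<rparr>) A B"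
  shows "A \<subseteq> H" "B \<subseteq> H" "H = A <#> B" "\<forall>a \<in> A. \<forall>b \<in> B. a \<otimes> b = b \<otimes> a"
proof -
  interpret H: group "G\<lparr>carrier := H\<rparr>" using H by (rule subgroup_imp_group)
  show "A \<subseteq> H" "B \<subseteq> H"
    using d normal_imp_subgroup[THEN subgroup.subset, of _ "G\<lparr>carrier := H\<rparr>"]
    unfolding internal_direct_product_def by simp_all
  show "H = A <#> B"
    using d unfolding internal_direct_product_def set_mult_def by simp
  show "\<forall>a \<in> A. \<forall>b \<in> B. a \<otimes> b = b \<otimes> a"
    using H.internal_direct_product_commute[OF d] by simp blast
qed

lemma (in group) direct_complement_component_central:
  assumes ud: "uniquely_divisible G" and H: "subgroup H G"
    and d: "internal_direct_product (G\<lparr>carrier := H\<rparr>) A B"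
    and g1: "g1 \<in> A" and g2: "g2 \<in> B"
    and g: "g1 \<otimes> g2 \<in> rat_closure_set G A <#> center G"
  shows "g2 \<in> center (G\<lparr>carrier := H\<rparr>)"
proof -
  note AB = internal_direct_product_subgroupD[OF H d]
  have H_carr: "H \<subseteq> carrier G" using H by (rule subgroup.subset)
  have A_carr: "A \<subseteq> carrier G" and B_carr: "B \<subseteq> carrier G" using AB(1,2) H_carr by auto
  interpret CB: subgroup "centralizer G B" G using B_carr by (rule subgroup_centralizer)
  have A_centralizes: "A \<subseteq> centralizer G B"
    using A_carr AB(4) unfolding centralizer_def by blast
  obtain a z where a: "a \<in> rat_closure_set G A" and z: "z \<in> center G"
    and g_az: "g1 \<otimes> g2 = a \<otimes> z"
    using g unfolding set_mult_def by blast
  have carr: "a \<in> carrier G" "z \<in> carrier G" "g1 \<in> carrier G" "g2 \<in> carrier G"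
    using a z g1 g2 A_carr B_carr unfolding rat_closure_set_def center_def by auto
  have g2_eq: "g2 = inv g1 \<otimes> (a \<otimes> z)"
    using inv_solve_left[of g2 g1 "a \<otimes> z"] carr g_az by simp
  have "a \<in> centralizer G B"
    using a rat_closure_set_subset[OF rational_subgroup_centralizer[OF ud B_carr] A_centralizes]
    by blast
  moreover have "g1 \<in> centralizer G B" "z \<in> centralizer G B"
    using g1 A_centralizes z B_carr unfolding center_def centralizer_def by auto
  ultimately have "g2 \<in> centralizer G B"
    unfolding g2_eq by simp
  moreover have "g2 \<in> centralizer G A"
    using carr(4) AB(4) g2 unfolding centralizer_def by (blast intro: sym)
  ultimately have "g2 \<in> centralizer G H"
    unfolding AB(3) using A_carr B_carr by (intro centralizer_set_mult) auto
  then show ?thesis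
    using g2 AB(2) H_carr center_subgroup_eq by blast
qed

lemma (in group) direct_factor_times_center_eq:
  assumes ud: "uniquely_divisible G" and H: "subgroup H G"
    and roots: "carrier G \<subseteq> rat_closure_set G H"
    and d: "internal_direct_product (G\<lparr>carrier := H\<rparr>) A B"
  shows "(rat_closure_set G A <#> center G) \<inter> H = A <#> center (G\<lparr>carrier := H\<rparr>)"
proof (intro equalityI subsetI)
  note AB = internal_direct_product_subgroupD[OF H d]
  fix g assume g: "g \<in> (rat_closure_set G A <#> center G) \<inter> H"
  then obtain g1 g2 where g1: "g1 \<in> A" and g2: "g2 \<in> B" and g_12: "g = g1 \<otimes> g2"
    using AB(3) unfolding set_mult_def by blast
  then have "g2 \<in> center (G\<lparr>carrier := H\<rparr>)"
    using direct_complement_component_central[OF ud H d g1 g2] g by blast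
  then show "g \<in> A <#> center (G\<lparr>carrier := H\<rparr>)"
    using g1 g_12 unfolding set_mult_def by blast
next
  note AB = internal_direct_product_subgroupD[OF H d]
  fix g assume "g \<in> A <#> center (G\<lparr>carrier := H\<rparr>)"
  then obtain a z where a: "a \<in> A" and z: "z \<in> center (G\<lparr>carrier := H\<rparr>)"
    and g_az: "g = a \<otimes> z"
    unfolding set_mult_def by blast
  have "a \<in> rat_closure_set G A"
    using a AB(1) subgroup.subset[OF H] unfolding rat_closure_set_def by (auto intro!: exI[of _ 1])
  moreover have "z \<in> center G"
    using z center_subgroup_subset_center[OF ud H roots] by blast
  moreover have "g \<in> H"
    using a AB(1) z g_az subgroup.m_closed[OF H] unfolding center_def by auto
  ultimately show "g \<in> (rat_closure_set G A <#> center G) \<inter> H"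
    using g_az unfolding set_mult_def by blast
qed

theorem mainTheorem11:
  fixes Gb :: "('a, 'b) monoid_scheme" and G G1 G2 R1 R2 :: "'a set"
  assumes fg: "finitely_generated_group (Gb\<lparr>carrier := G\<rparr>)"
    and nil: "nilpotent_group (Gb\<lparr>carrier := G\<rparr>)"
    and tf: "torsion_free (Gb\<lparr>carrier := G\<rparr>)"
    and rc: "rational_closure_of Gb G"
    and dG: "internal_direct_product (Gb\<lparr>carrier := G\<rparr>) G1 G2"
    and R1: "rational_subgroup R1 Gb" and R2: "rational_subgroup R2 Gb"
    and dR: "internal_direct_product Gb R1 R2"
    and m1: "rat_closure_set Gb G1 <#>\<^bsub>Gb\<^esub> center Gb = R1 <#>\<^bsub>Gb\<^esub> center Gb"
    and m2: "rat_closure_set Gb G2 <#>\<^bsub>Gb\<^esub> center Gb = R2 <#>\<^bsub>Gb\<^esub> center Gb"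
  shows "(R1 <#>\<^bsub>Gb\<^esub> center Gb) \<inter> G = G1 <#>\<^bsub>Gb\<^esub> center (Gb\<lparr>carrier := G\<rparr>)
       \<and> (R2 <#>\<^bsub>Gb\<^esub> center Gb) \<inter> G = G2 <#>\<^bsub>Gb\<^esub> center (Gb\<lparr>carrier := G\<rparr>)"
proof -
  interpret group Gb using rc unfolding rational_closure_of_def by blast
  have ud: "uniquely_divisible Gb" and G: "subgroup G Gb"
    and roots: "carrier Gb \<subseteq> rat_closure_set Gb G"
    using rc unfolding rational_closure_of_def rat_closure_set_def by auto
  interpret G: group "Gb\<lparr>carrier := G\<rparr>" using G by (rule subgroup_imp_group)
  have dG': "internal_direct_product (Gb\<lparr>carrier := G\<rparr>) G2 G1"
    using dG by (rule G.internal_direct_product_sym)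
  show ?thesis
    using direct_factor_times_center_eq[OF ud G roots dG]
      direct_factor_times_center_eq[OF ud G roots dG'] m1 m2
    by simp
qed

end
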